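(* Let $\sigma>0$ and let $X$ be lognormal$(0,\sigma^2)$, i.e. $X=e^{Y}$ with $Y\sim\mathrm{N}(0,\sigma^2)$, with density $f(x)=\frac{1}{x\sigma\sqrt{2\pi}}e^{-(\log x)^2/(2\sigma^2)}$, $x>0$. For $\theta>0$ let $\mathcal{L}(\theta)=\mathbb{E}[e^{-\theta X}]$, $\kappa(\theta)=\log\mathcal{L}(\theta)$, and let $F_\theta$ be the probability distribution on $(0,\infty)$ with density $f_\theta(x)=e^{-\theta x-\kappa(\theta)}f(x)$; write $\mathbb{E}_\theta$ and $\mathrm{Var}_\theta$ for the expectation and variance of $X$ when $X\sim F_\theta$. Define $$\mu_\theta=-\mathcal{W}(\theta\sigma^2),\qquad \sigma_\theta^2=\frac{\sigma^2}{1+\mathcal{W}(\theta\sigma^2)},$$ where $\mathcal{W}$ is the Lambert W function. Then $$\lim_{\theta\to\infty}\frac{\mathbb{E}_\theta[X]}{\exp\{\mu_\theta+\sigma_\theta^2/2\}}=1,\qquad \lim_{\theta\to\infty}\frac{\mathrm{Var}_\theta[X]}{\exp\{2\mu_\theta+\sigma_\theta^2\}\,\bigl(e^{\sigma_\theta^2}-1\bigr)}=1.$$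
   Context: The Lambert W function $\mathcal{W}(a)$ for $a>0$ is the unique (positive) solution $w$ of $we^{w}=a$. $F_\theta$ is the exponentially tilted (Esscher transformed) lognormal distribution. *)

theory Defs
  imports "HOL-Probability.Probability"
begin

definition lambertW :: "real \<Rightarrow> real" where
  "lambertW a = (THE w. w > 0 \<and> w * exp w = a)"

definition lognormal_density :: "real \<Rightarrow> real \<Rightarrow> real" where
  "lognormal_density \<sigma> x =
     (if x > 0 then exp (- (ln x)\<^sup>2 / (2 * \<sigma>\<^sup>2)) / (x * \<sigma> * sqrt (2 * pi)) else 0)"

definition lognormal_laplace :: "real \<Rightarrow> real \<Rightarrow> real" where
  "lognormal_laplace \<sigma> \<theta> = (LINT x:{0<..}|lborel. exp (- \<theta> * x) * lognormal_density \<sigma> x)"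

definition lognormal_kappa :: "real \<Rightarrow> real \<Rightarrow> real" where
  "lognormal_kappa \<sigma> \<theta> = ln (lognormal_laplace \<sigma> \<theta>)"

definition tilted_density :: "real \<Rightarrow> real \<Rightarrow> real \<Rightarrow> real" where
  "tilted_density \<sigma> \<theta> x = exp (- \<theta> * x - lognormal_kappa \<sigma> \<theta>) * lognormal_density \<sigma> x"

definition tilted_measure :: "real \<Rightarrow> real \<Rightarrow> real measure" where
  "tilted_measure \<sigma> \<theta> = density lborel (\<lambda>x. ennreal (tilted_density \<sigma> \<theta> x))"

definition tilted_mean :: "real \<Rightarrow> real \<Rightarrow> real" where
  "tilted_mean \<sigma> \<theta> = (\<integral>x. x \<partial>tilted_measure \<sigma> \<theta>)"

definition tilted_var :: "real \<Rightarrow> real \<Rightarrow> real" where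
  "tilted_var \<sigma> \<theta> = (\<integral>x. (x - tilted_mean \<sigma> \<theta>)\<^sup>2 \<partial>tilted_measure \<sigma> \<theta>)"

definition mu_theta :: "real \<Rightarrow> real \<Rightarrow> real" where
  "mu_theta \<sigma> \<theta> = - lambertW (\<theta> * \<sigma>\<^sup>2)"

definition sigma2_theta :: "real \<Rightarrow> real \<Rightarrow> real" where
  "sigma2_theta \<sigma> \<theta> = \<sigma>\<^sup>2 / (1 + lambertW (\<theta> * \<sigma>\<^sup>2))"

end

theory Submission
  imports Defs "HOL-Real_Asymp.Real_Asymp"
begin

text \<open>Write \<open>W = lambertW (\<theta>\<sigma>\<^sup>2)\<close> and \<open>m = exp (- W) = exp \<mu>\<^sub>\<theta>\<close>. Integration by parts
  against the lognormal density gives three Stein identities for \<open>X \<sim> F\<^sub>\<theta>\<close>: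
  \<open>\<theta>\<sigma>\<^sup>2 E X = - E ln X\<close>, \<open>\<theta>\<sigma>\<^sup>2 E (X ln X) = \<sigma>\<^sup>2 - E (ln X)\<^sup>2\<close> and
  \<open>\<theta>\<sigma>\<^sup>2 E X\<^sup>2 = \<sigma>\<^sup>2 E X - E (X ln X)\<close>. Since \<open>ln X + W\<close> and \<open>X - m\<close> have the same sign,
  \<open>E ((ln X + W) (X - m)) \<ge> 0\<close>, which together with the identities gives
  \<open>E (ln X + W)\<^sup>2 \<le> \<sigma>\<^sup>2\<close>. The first identity then yields \<open>E X / m - 1 = O(1 / W)\<close>. The
  third one shows that \<open>W Var X / (\<sigma>\<^sup>2 m\<^sup>2)\<close> differs from \<open>E X / m\<close> by \<open>Cov (X, ln X) / (\<sigma>\<^sup>2 m)\<close>,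
  which Cauchy-Schwarz bounds by \<open>O(1 / sqrt W)\<close>. Finally \<open>W \<longrightarrow> \<infinity>\<close>, so \<open>\<sigma>\<^sub>\<theta>\<^sup>2 \<longrightarrow> 0\<close> and the
  remaining normalising factors tend to \<open>1\<close>.\<close>

lemma mult_exp_strict_mono:
  fixes v w :: real
  assumes "0 \<le> v" "v < w"
  shows "v * exp v < w * exp w"
proof -
  have "v * exp v \<le> v * exp w" using assms by (intro mult_left_mono) auto
  also have "\<dots> < w * exp w" using assms by (intro mult_strict_right_mono) auto
  finally show ?thesis .
qed

lemma lambertW_spec:
  fixes a :: real
  assumes "a > 0"
  shows lambertW_pos: "lambertW a > 0" and lambertW_mult_exp: "lambertW a * exp (lambertW a) = a"
proof -
  have "\<exists>w. 0 \<le> w \<and> w \<le> a \<and> w * exp w = a"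
  proof (rule IVT')
    have "a * 1 \<le> a * exp a" using assms by (intro mult_left_mono) auto
    then show "a \<le> a * exp a" by simp
  qed (use assms in \<open>auto intro!: continuous_intros\<close>)
  then obtain w where w: "0 \<le> w" "w * exp w = a" by blast
  with assms have "w > 0" by (cases "w = 0") auto
  have "\<exists>!w. w > 0 \<and> w * exp w = a"
  proof (rule ex1I[of _ w])
    fix v assume v: "v > 0 \<and> v * exp v = a"
    show "v = w"
      using mult_exp_strict_mono[of v w] mult_exp_strict_mono[of w v] v w
      by (cases v w rule: linorder_cases) auto
  qed (use \<open>w > 0\<close> w in simp)
  then have "lambertW a > 0 \<and> lambertW a * exp (lambertW a) = a"
    unfolding lambertW_def by (rule theI')
  then show "lambertW a > 0" "lambertW a * exp (lambertW a) = a" by auto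
qed

lemma filterlim_lambertW_at_top: "filterlim lambertW at_top at_top"
  unfolding filterlim_at_top
proof
  fix z :: real
  show "eventually (\<lambda>a. z \<le> lambertW a) at_top"
    using eventually_gt_at_top[of "\<bar>z\<bar> * exp \<bar>z\<bar>"]
  proof eventually_elim
    case (elim a)
    then have "a > 0" by (smt (verit) exp_gt_zero mult_nonneg_nonneg)
    have "\<not> lambertW a < \<bar>z\<bar>"
      using mult_exp_strict_mono[of "lambertW a" "\<bar>z\<bar>"] elim
        lambertW_pos[OF \<open>a > 0\<close>] lambertW_mult_exp[OF \<open>a > 0\<close>] by auto
    then show ?case by linarith
  qed
qed

lemma filterlim_lambertW_scaled_at_top:
  fixes \<sigma> :: real
  assumes "\<sigma> > 0"
  shows "filterlim (\<lambda>\<theta>. lambertW (\<theta> * \<sigma>\<^sup>2)) at_top at_top"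
proof (rule filterlim_compose[OF filterlim_lambertW_at_top])
  show "filterlim (\<lambda>\<theta>. \<theta> * \<sigma>\<^sup>2) at_top at_top"
    using assms by (intro filterlim_at_top_mult_tendsto_pos[OF tendsto_const] filterlim_ident) simp
qed

text \<open>Completing the square: a Gaussian in \<open>ln x\<close> is dominated by \<open>exp (- 5 \<bar>ln x\<bar>)\<close>, a weight
  that beats the growth of \<open>(1 + x\<^sup>2 + (ln x)\<^sup>2) (1 + x\<^sup>2) / x\<close> at both ends of \<open>(0, \<infinity>)\<close>.\<close>

lemma exp_neg_square_le:
  fixes s u :: real
  assumes "s > 0"
  shows "exp (- u\<^sup>2 / (2 * s\<^sup>2)) \<le> exp (25 * s\<^sup>2 / 2) * exp (- 5 * \<bar>u\<bar>)"
proof -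
  have "10 * s\<^sup>2 * \<bar>u\<bar> \<le> u\<^sup>2 + 25 * s\<^sup>2 * s\<^sup>2"
    using zero_le_power2[of "\<bar>u\<bar> - 5 * s\<^sup>2"] by (simp add: power2_eq_square algebra_simps)
  then have "- u\<^sup>2 / (2 * s\<^sup>2) \<le> 25 * s\<^sup>2 / 2 + - 5 * \<bar>u\<bar>"
    using assms by (simp add: field_simps)
  then show ?thesis by (simp flip: exp_add)
qed

lemma log_moment_weight_le:
  fixes x :: real
  assumes x: "x > 0"
  shows "(1 + x\<^sup>2 + (ln x)\<^sup>2) * exp (- 5 * \<bar>ln x\<bar>) / x \<le> 6 / (1 + x\<^sup>2)"
proof (cases "x \<ge> 1")
  case True
  have "exp (5 * ln x) = x ^ 5" using exp_of_nat_mult[of 5 "ln x"] x by simp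
  then have e: "exp (- 5 * \<bar>ln x\<bar>) = 1 / x ^ 5" using True by (simp add: exp_minus field_simps)
  have "(ln x)\<^sup>2 \<le> x\<^sup>2" using True ln_le_minus_one[of x] x by (intro power_mono) auto
  moreover have "1 \<le> x\<^sup>2" using True by (simp add: one_le_power)
  ultimately have "(1 + x\<^sup>2 + (ln x)\<^sup>2) * (1 + x\<^sup>2) \<le> (3 * x\<^sup>2) * (2 * x\<^sup>2)"
    by (intro mult_mono) auto
  also have "\<dots> \<le> 6 * x ^ 6"
    using power_increasing[of 4 6 x] True by (simp add: power2_eq_square power_numeral_reduce)
  finally show ?thesis
    using x unfolding e by (simp add: divide_simps power_numeral_reduce add_pos_nonneg)
next
  case False
  have l0: "ln x \<le> 0" using False x by simp
  have "exp (- 5 * \<bar>ln x\<bar>) = x ^ 5" using exp_of_nat_mult[of 5 "ln x"] x l0 by simp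
  then have e: "(1 + x\<^sup>2 + (ln x)\<^sup>2) * exp (- 5 * \<bar>ln x\<bar>) / x = (1 + x\<^sup>2 + (ln x)\<^sup>2) * x ^ 4"
    using x by (simp add: eval_nat_numeral)
  have "- ln x * x \<le> 1"
    using ln_le_minus_one[of "1/x"] x by (simp add: ln_div field_simps)
  moreover have "0 \<le> - ln x * x" using l0 x by (simp add: mult_nonpos_nonneg)
  ultimately have sq: "(ln x)\<^sup>2 * x\<^sup>2 \<le> 1"
    using power_mono[of "- ln x * x" 1 2] by (simp add: power_mult_distrib)
  have x2: "x\<^sup>2 \<le> 1" and x4: "x ^ 4 \<le> 1" and x6: "x ^ 6 \<le> 1"
    using False x by (simp_all add: power_le_one)
  have "(1 + x\<^sup>2 + (ln x)\<^sup>2) * x ^ 4 = x ^ 4 + x ^ 6 + ((ln x)\<^sup>2 * x\<^sup>2) * x\<^sup>2"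
    by (simp add: eval_nat_numeral algebra_simps)
  also have "\<dots> \<le> 3" using x2 x4 x6 sq mult_mono[OF sq x2] by simp
  finally have "(1 + x\<^sup>2 + (ln x)\<^sup>2) * x ^ 4 * (1 + x\<^sup>2) \<le> 3 * 2"
    using x2 by (intro mult_mono) auto
  then show ?thesis unfolding e by (simp add: divide_simps add_pos_nonneg)
qed

lemma lognormal_density_moment_le:
  fixes \<sigma> x :: real
  assumes "\<sigma> > 0"
  shows "(1 + x\<^sup>2 + (ln x)\<^sup>2) * lognormal_density \<sigma> x
           \<le> 6 * exp (25 * \<sigma>\<^sup>2 / 2) / (\<sigma> * sqrt (2 * pi)) / (1 + x\<^sup>2)"
proof (cases "x > 0")
  case True
  define c where "c = exp (25 * \<sigma>\<^sup>2 / 2) / (\<sigma> * sqrt (2 * pi))"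
  have "c > 0" using assms by (simp add: c_def)
  have "lognormal_density \<sigma> x \<le> c * (exp (- 5 * \<bar>ln x\<bar>) / x)"
    using exp_neg_square_le[OF assms, of "ln x"] True assms
    by (simp add: lognormal_density_def c_def field_simps)
  then have "(1 + x\<^sup>2 + (ln x)\<^sup>2) * lognormal_density \<sigma> x
               \<le> (1 + x\<^sup>2 + (ln x)\<^sup>2) * (c * (exp (- 5 * \<bar>ln x\<bar>) / x))"
    by (rule mult_left_mono) (simp add: add_nonneg_nonneg)
  also have "\<dots> = c * ((1 + x\<^sup>2 + (ln x)\<^sup>2) * exp (- 5 * \<bar>ln x\<bar>) / x)"
    by simp
  also have "\<dots> \<le> c * (6 / (1 + x\<^sup>2))"
    using log_moment_weight_le[OF True] by (rule mult_left_mono) (use \<open>c > 0\<close> in simp)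
  finally show ?thesis by (simp add: c_def mult.commute)
qed (use assms in \<open>simp add: lognormal_density_def add_pos_nonneg\<close>)

lemma integrable_lognormal_moment:
  fixes \<sigma> k :: real and g :: "real \<Rightarrow> real"
  assumes "\<sigma> > 0" and [measurable]: "g \<in> borel_measurable borel"
    and g: "\<And>x. x > 0 \<Longrightarrow> \<bar>g x\<bar> \<le> k * (1 + x\<^sup>2 + (ln x)\<^sup>2)"
  shows "integrable lborel (\<lambda>x. g x * lognormal_density \<sigma> x)"
proof (rule Bochner_Integration.integrable_bound)
  define K where "K = 6 * exp (25 * \<sigma>\<^sup>2 / 2) / (\<sigma> * sqrt (2 * pi))"
  show "integrable lborel (\<lambda>x. \<bar>k\<bar> * K * inverse (1 + x\<^sup>2))"
    using integrable_inverse_1_plus_square by (simp add: set_integrable_def)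
  show "AE x in lborel. norm (g x * lognormal_density \<sigma> x) \<le> norm (\<bar>k\<bar> * K * inverse (1 + x\<^sup>2))"
  proof (rule AE_I2)
    fix x :: real
    have nonneg: "lognormal_density \<sigma> x \<ge> 0" "K \<ge> 0"
      using assms(1) by (auto simp: lognormal_density_def K_def)
    have "\<bar>g x\<bar> * lognormal_density \<sigma> x \<le> \<bar>k\<bar> * ((1 + x\<^sup>2 + (ln x)\<^sup>2) * lognormal_density \<sigma> x)"
    proof (cases "x > 0")
      case True
      have "\<bar>g x\<bar> \<le> \<bar>k\<bar> * (1 + x\<^sup>2 + (ln x)\<^sup>2)"
        using g[OF True] abs_ge_self[of k] by (smt (verit) mult_right_mono zero_le_power2)
      then show ?thesis using nonneg by (metis mult.assoc mult_right_mono)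
    qed (simp add: lognormal_density_def)
    also have "\<dots> \<le> \<bar>k\<bar> * (K / (1 + x\<^sup>2))"
      using lognormal_density_moment_le[OF assms(1), of x] unfolding K_def by (rule mult_left_mono) simp
    finally show "norm (g x * lognormal_density \<sigma> x) \<le> norm (\<bar>k\<bar> * K * inverse (1 + x\<^sup>2))"
      using nonneg by (simp add: abs_mult divide_inverse add_pos_nonneg)
  qed
qed (simp add: lognormal_density_def)

lemma abs_le_one_plus_square: "\<bar>y\<bar> \<le> 1 + (y::real)\<^sup>2"
  using zero_le_power2[of "\<bar>y\<bar> - 1"] by (simp add: power2_eq_square algebra_simps)

lemma set_integral_greaterThan_0_deriv_eq_0:
  fixes F f :: "real \<Rightarrow> real"
  assumes F: "\<And>x. x > 0 \<Longrightarrow> (F has_real_derivative f x) (at x)"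
    and f: "\<And>x. x > 0 \<Longrightarrow> isCont f x"
    and F_0: "(F \<longlongrightarrow> 0) (at_right 0)" and F_top: "(F \<longlongrightarrow> 0) at_top"
    and int: "set_integrable lborel {0<..} f"
  shows "(LINT x:{0<..}|lborel. f x) = 0"
proof -
  have "(LBINT x=0..\<infinity>. f x) = 0 - 0"
  proof (rule interval_integral_FTC_integrable)
    show "set_integrable lborel (einterval 0 \<infinity>) f"
      using int by (simp add: einterval_def zero_ereal_def greaterThan_def)
    show "((F \<circ> real_of_ereal) \<longlongrightarrow> 0) (at_right 0)" "((F \<circ> real_of_ereal) \<longlongrightarrow> 0) (at_left \<infinity>)"
      using F_0 F_top by (simp_all add: zero_ereal_def ereal_tendsto_simps1)
  qed (use F f in \<open>auto simp: has_real_derivative_iff_has_vector_derivative zero_ereal_def\<close>)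
  then show ?thesis
    using interval_integral_to_infinity_eq[of lborel 0 f] by (simp add: zero_ereal_def)
qed

locale tilted_lognormal =
  fixes \<sigma> \<theta> :: real
  assumes sigma_pos: "\<sigma> > 0" and theta_pos: "\<theta> > 0"
begin

lemma integrable_laplace_integrand: "integrable lborel (\<lambda>x. exp (- \<theta> * x) * lognormal_density \<sigma> x)"
proof (rule integrable_lognormal_moment[OF sigma_pos, where k = 1])
  show "\<bar>exp (- \<theta> * x)\<bar> \<le> 1 * (1 + x\<^sup>2 + (ln x)\<^sup>2)" if "x > 0" for x
  proof -
    have "\<bar>exp (- \<theta> * x)\<bar> \<le> 1" using that theta_pos by simp
    moreover have "1 \<le> 1 * (1 + x\<^sup>2 + (ln x)\<^sup>2)" by simp
    ultimately show ?thesis by linarith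
  qed
qed simp

lemma lognormal_laplace_eq: "lognormal_laplace \<sigma> \<theta> = (\<integral>x. exp (- \<theta> * x) * lognormal_density \<sigma> x \<partial>lborel)"
  unfolding lognormal_laplace_def set_lebesgue_integral_def
  by (intro Bochner_Integration.integral_cong) (auto simp: lognormal_density_def indicator_def)

lemma lognormal_laplace_pos: "lognormal_laplace \<sigma> \<theta> > 0"
proof -
  let ?f = "\<lambda>x. exp (- \<theta> * x) * lognormal_density \<sigma> x"
  have nonneg: "AE x in lborel. 0 \<le> ?f x"
    using sigma_pos by (simp add: lognormal_density_def)
  have not_null: "\<not> (AE x in lborel. x \<notin> {0<..1::real})"
    using AE_iff_measurable[of "{0<..1::real}" lborel "\<lambda>x. x \<notin> {0<..1}"]
    by (auto simp del: greaterThanAtMost_iff)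
  have pos: "?f x > 0" if "x \<in> {0<..1}" for x
    using that sigma_pos by (simp add: lognormal_density_def)
  have "AE x in lborel. x \<notin> {0<..1::real}" if "AE x in lborel. ?f x = 0"
    using that by eventually_elim (use pos in force)
  with not_null have "integral\<^sup>L lborel ?f \<noteq> 0"
    using integral_nonneg_eq_0_iff_AE[OF integrable_laplace_integrand nonneg] by blast
  with integral_nonneg_AE[OF nonneg] show ?thesis
    unfolding lognormal_laplace_eq by linarith
qed

lemma tilted_density_eq:
  "tilted_density \<sigma> \<theta> x = exp (- \<theta> * x) * lognormal_density \<sigma> x / lognormal_laplace \<sigma> \<theta>"
  using lognormal_laplace_pos
  by (simp add: tilted_density_def lognormal_kappa_def exp_diff)

lemma tilted_density_nonneg: "tilted_density \<sigma> \<theta> x \<ge> 0"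
  using sigma_pos by (simp add: tilted_density_def lognormal_density_def)

lemma borel_measurable_tilted_density[measurable]: "tilted_density \<sigma> \<theta> \<in> borel_measurable borel"
  unfolding tilted_density_def lognormal_density_def by measurable

sublocale prob_space "tilted_measure \<sigma> \<theta>"
proof
  have "integrable lborel (tilted_density \<sigma> \<theta>)"
    using integrable_divide[OF integrable_laplace_integrand, of "lognormal_laplace \<sigma> \<theta>"]
    by (simp add: tilted_density_eq[abs_def])
  then have "emeasure (tilted_measure \<sigma> \<theta>) UNIV = ennreal (\<integral>x. tilted_density \<sigma> \<theta> x \<partial>lborel)"
    by (simp add: tilted_measure_def emeasure_density nn_integral_eq_integral tilted_density_nonneg)
  also have "(\<integral>x. tilted_density \<sigma> \<theta> x \<partial>lborel) = 1"
    using lognormal_laplace_pos by (simp add: tilted_density_eq lognormal_laplace_eq)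
  finally show "emeasure (tilted_measure \<sigma> \<theta>) (space (tilted_measure \<sigma> \<theta>)) = 1"
    by (simp add: tilted_measure_def)
qed

lemma AE_tilted_measure_pos: "AE x in tilted_measure \<sigma> \<theta>. x > 0"
  unfolding tilted_measure_def
  by (subst AE_density) (auto simp: tilted_density_def lognormal_density_def)

lemma integrable_tilted_measure:
  fixes g :: "real \<Rightarrow> real" and k :: real
  assumes [measurable]: "g \<in> borel_measurable borel"
    and g: "\<And>x. x > 0 \<Longrightarrow> \<bar>g x\<bar> \<le> k * (1 + x\<^sup>2 + (ln x)\<^sup>2)"
  shows "integrable (tilted_measure \<sigma> \<theta>) g"
proof -
  let ?L = "lognormal_laplace \<sigma> \<theta>"
  have "integrable lborel (\<lambda>x. (exp (- \<theta> * x) * g x / ?L) * lognormal_density \<sigma> x)"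
  proof (rule integrable_lognormal_moment[OF sigma_pos, where k = "k / ?L"])
    fix x :: real assume "x > 0"
    have "exp (- \<theta> * x) \<le> 1" using \<open>x > 0\<close> theta_pos by simp
    then have "\<bar>exp (- \<theta> * x) * g x\<bar> \<le> \<bar>g x\<bar>"
      by (simp add: abs_mult mult_left_le_one_le)
    with g[OF \<open>x > 0\<close>] lognormal_laplace_pos
    show "\<bar>exp (- \<theta> * x) * g x / ?L\<bar> \<le> k / ?L * (1 + x\<^sup>2 + (ln x)\<^sup>2)"
      by (simp add: divide_right_mono)
  qed simp
  moreover have "(\<lambda>x. tilted_density \<sigma> \<theta> x *\<^sub>R g x)
                   = (\<lambda>x. (exp (- \<theta> * x) * g x / ?L) * lognormal_density \<sigma> x)"
    by (simp add: tilted_density_eq fun_eq_iff)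
  ultimately show ?thesis
    unfolding tilted_measure_def by (subst integrable_density) (simp_all add: tilted_density_nonneg)
qed

lemma integrable_moments [simp]:
  "integrable (tilted_measure \<sigma> \<theta>) (\<lambda>x. x)"
  "integrable (tilted_measure \<sigma> \<theta>) (\<lambda>x. x\<^sup>2)"
  "integrable (tilted_measure \<sigma> \<theta>) ln"
  "integrable (tilted_measure \<sigma> \<theta>) (\<lambda>x. (ln x)\<^sup>2)"
  "integrable (tilted_measure \<sigma> \<theta>) (\<lambda>x. x * ln x)"
proof -
  have "\<bar>x * ln x\<bar> \<le> 2 * (1 + x\<^sup>2 + (ln x)\<^sup>2)" for x :: real
  proof -
    have "2 * \<bar>x * ln x\<bar> \<le> x\<^sup>2 + (ln x)\<^sup>2"
      using zero_le_power2[of "\<bar>x\<bar> - \<bar>ln x\<bar>"] by (simp add: abs_mult power2_eq_square algebra_simps)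
    then show ?thesis by (simp add: algebra_simps)
  qed
  moreover have "x \<le> 2 * (1 + x\<^sup>2 + (ln x)\<^sup>2)" for x :: real
    using abs_le_one_plus_square[of x] by (smt (verit) zero_le_power2)
  moreover have "\<bar>ln x\<bar> \<le> 2 * (1 + x\<^sup>2 + (ln x)\<^sup>2)" for x :: real
    using abs_le_one_plus_square[of "ln x"] by (smt (verit) zero_le_power2)
  moreover have "x\<^sup>2 \<le> 2 * (1 + x\<^sup>2 + (ln x)\<^sup>2)" "(ln x)\<^sup>2 \<le> 2 * (1 + x\<^sup>2 + (ln x)\<^sup>2)"
    for x :: real
    by (smt (verit) zero_le_power2)+
  ultimately show "integrable (tilted_measure \<sigma> \<theta>) (\<lambda>x. x)" "integrable (tilted_measure \<sigma> \<theta>) (\<lambda>x. x\<^sup>2)"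
    "integrable (tilted_measure \<sigma> \<theta>) ln" "integrable (tilted_measure \<sigma> \<theta>) (\<lambda>x. (ln x)\<^sup>2)"
    "integrable (tilted_measure \<sigma> \<theta>) (\<lambda>x. x * ln x)"
    by (auto intro!: integrable_tilted_measure[where k = 2])
qed

text \<open>For \<open>x > 0\<close> the tilted density is \<open>r x / (x \<sigma> sqrt (2\<pi>) L(\<theta>))\<close> with
  \<open>r x = exp (- \<theta> x - (ln x)\<^sup>2 / (2\<sigma>\<^sup>2))\<close>, and \<open>h\<close> times it is \<open>(g r)'\<close> up to that constant.\<close>

lemma stein_identity:
  fixes g g' h :: "real \<Rightarrow> real"
  assumes g: "\<And>x. x > 0 \<Longrightarrow> (g has_real_derivative g' x) (at x)"
    and g': "\<And>x. x > 0 \<Longrightarrow> isCont g' x"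
    and lim_0: "((\<lambda>x. g x * exp (- \<theta> * x - (ln x)\<^sup>2 / (2 * \<sigma>\<^sup>2))) \<longlongrightarrow> 0) (at_right 0)"
    and lim_top: "((\<lambda>x. g x * exp (- \<theta> * x - (ln x)\<^sup>2 / (2 * \<sigma>\<^sup>2))) \<longlongrightarrow> 0) at_top"
    and h: "\<And>x. x > 0 \<Longrightarrow> h x = x * g' x - g x * (\<theta> * x + ln x / \<sigma>\<^sup>2)"
    and int: "integrable (tilted_measure \<sigma> \<theta>) h"
  shows "expectation h = 0"
proof -
  define r where "r x = exp (- \<theta> * x - (ln x)\<^sup>2 / (2 * \<sigma>\<^sup>2))" for x
  define f where "f x = g' x * r x + g x * (r x * (- \<theta> - ln x / (\<sigma>\<^sup>2 * x)))" for x
  define C where "C = \<sigma> * sqrt (2 * pi) * lognormal_laplace \<sigma> \<theta>"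
  have "C > 0" using sigma_pos lognormal_laplace_pos by (simp add: C_def)
  have r_deriv: "(r has_real_derivative r x * (- \<theta> - ln x / (\<sigma>\<^sup>2 * x))) (at x)" if "x > 0" for x
    unfolding r_def using that sigma_pos
    by (auto intro!: derivative_eq_intros simp: field_simps power2_eq_square)
  have density_h: "indicator {0<..} x * f x = C * (tilted_density \<sigma> \<theta> x * h x)" for x
  proof (cases "x > 0")
    case True
    have "exp (- \<theta> * x) * exp (- (ln x)\<^sup>2 / (2 * \<sigma>\<^sup>2)) = r x"
      by (simp add: r_def flip: exp_add)
    then show ?thesis
      using True sigma_pos lognormal_laplace_pos
      by (simp add: f_def h C_def tilted_density_eq lognormal_density_def field_simps)
  qed (simp add: tilted_density_def lognormal_density_def)
  have h_measurable[measurable]: "h \<in> borel_measurable borel"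
    using borel_measurable_integrable[OF int] by (simp add: tilted_measure_def)
  have "integrable lborel (\<lambda>x. tilted_density \<sigma> \<theta> x * h x)"
    using int unfolding tilted_measure_def by (subst (asm) integrable_density) (simp_all add: tilted_density_nonneg)
  then have int_f: "set_integrable lborel {0<..} f"
    unfolding set_integrable_def using density_h by simp
  have "(LINT x:{0<..}|lborel. f x) = 0"
  proof (rule set_integral_greaterThan_0_deriv_eq_0[where F = "\<lambda>x. g x * r x"])
    show "((\<lambda>x. g x * r x) has_real_derivative f x) (at x)" if "x > 0" for x
      using g[OF that] r_deriv[OF that] unfolding f_def by (auto intro!: derivative_eq_intros)
    show "isCont f x" if "x > 0" for x
      using that g'[OF that] DERIV_isCont[OF g[OF that]] DERIV_isCont[OF r_deriv[OF that]] sigma_pos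
      unfolding f_def by (intro continuous_intros) auto
  qed (use lim_0 lim_top int_f in \<open>simp_all add: r_def\<close>)
  moreover have "expectation h = (\<integral>x. tilted_density \<sigma> \<theta> x * h x \<partial>lborel)"
    unfolding tilted_measure_def by (subst integral_density) (simp_all add: tilted_density_nonneg)
  ultimately show ?thesis
    using density_h \<open>C > 0\<close> by (simp add: set_lebesgue_integral_def)
qed

lemma stein_mean: "\<theta> * \<sigma>\<^sup>2 * expectation (\<lambda>x. x) = - expectation ln"
proof -
  have "expectation (\<lambda>x. - \<theta> * x - ln x / \<sigma>\<^sup>2) = 0"
    by (rule stein_identity[where g = "\<lambda>_. 1" and g' = "\<lambda>_. 0"])
      (use sigma_pos theta_pos in \<open>auto intro!: derivative_eq_intros, real_asymp+\<close>)
  then show ?thesis using sigma_pos by (simp add: field_simps)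
qed

lemma stein_log: "\<theta> * \<sigma>\<^sup>2 * expectation (\<lambda>x. x * ln x) = \<sigma>\<^sup>2 - expectation (\<lambda>x. (ln x)\<^sup>2)"
proof -
  have "expectation (\<lambda>x. 1 - \<theta> * (x * ln x) - (ln x)\<^sup>2 / \<sigma>\<^sup>2) = 0"
  proof (rule stein_identity[where g = ln and g' = "\<lambda>x. 1 / x"])
    show "integrable (tilted_measure \<sigma> \<theta>) (\<lambda>x. 1 - \<theta> * (x * ln x) - (ln x)\<^sup>2 / \<sigma>\<^sup>2)"
      by simp
  qed (use sigma_pos theta_pos in \<open>auto intro!: derivative_eq_intros simp: power2_eq_square algebra_simps, real_asymp+\<close>)
  then have "1 - \<theta> * expectation (\<lambda>x. x * ln x) - expectation (\<lambda>x. (ln x)\<^sup>2) / \<sigma>\<^sup>2 = 0"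
    by (simp add: prob_space)
  then show ?thesis using sigma_pos by (simp add: field_simps)
qed

lemma stein_square:
  "\<theta> * \<sigma>\<^sup>2 * expectation (\<lambda>x. x\<^sup>2) = \<sigma>\<^sup>2 * expectation (\<lambda>x. x) - expectation (\<lambda>x. x * ln x)"
proof -
  have "expectation (\<lambda>x. x - \<theta> * x\<^sup>2 - x * ln x / \<sigma>\<^sup>2) = 0"
  proof (rule stein_identity[where g = "\<lambda>x. x" and g' = "\<lambda>_. 1"])
    show "integrable (tilted_measure \<sigma> \<theta>) (\<lambda>x. x - \<theta> * x\<^sup>2 - x * ln x / \<sigma>\<^sup>2)"
      by simp
  qed (use sigma_pos theta_pos in \<open>auto intro!: derivative_eq_intros simp: power2_eq_square algebra_simps, real_asymp+\<close>)
  then show ?thesis using sigma_pos by (simp add: field_simps)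
qed

abbreviation W :: real where "W \<equiv> lambertW (\<theta> * \<sigma>\<^sup>2)"

lemma W_pos: "W > 0"
  using sigma_pos theta_pos by (simp add: lambertW_pos)

lemma theta_sigma2_mult_exp: "\<theta> * \<sigma>\<^sup>2 * exp (- W) = W"
  using lambertW_mult_exp[of "\<theta> * \<sigma>\<^sup>2"] sigma_pos theta_pos by (simp add: exp_minus field_simps)

lemma W_mult_eq: "W * a = exp (- W) * (\<theta> * \<sigma>\<^sup>2 * a)"
proof -
  have "exp (- W) * (\<theta> * \<sigma>\<^sup>2 * a) = (\<theta> * \<sigma>\<^sup>2 * exp (- W)) * a" by (simp only: mult_ac)
  then show ?thesis by (simp only: theta_sigma2_mult_exp)
qed

lemma W_mult_mean: "W * expectation (\<lambda>x. x) = - exp (- W) * expectation ln"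
  unfolding W_mult_eq stein_mean by simp

lemma W_mult_x_log: "W * expectation (\<lambda>x. x * ln x) = exp (- W) * (\<sigma>\<^sup>2 - expectation (\<lambda>x. (ln x)\<^sup>2))"
  unfolding W_mult_eq stein_log ..

lemma W_mult_second_moment:
  "W * expectation (\<lambda>x. x\<^sup>2) = exp (- W) * (\<sigma>\<^sup>2 * expectation (\<lambda>x. x) - expectation (\<lambda>x. x * ln x))"
  unfolding W_mult_eq stein_square ..

lemma expectation_affine_square:
  "expectation (\<lambda>x. (a + b * x + c * ln x)\<^sup>2)
     = a\<^sup>2 + b\<^sup>2 * expectation (\<lambda>x. x\<^sup>2) + c\<^sup>2 * expectation (\<lambda>x. (ln x)\<^sup>2)
       + 2 * a * b * expectation (\<lambda>x. x) + 2 * a * c * expectation ln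
       + 2 * b * c * expectation (\<lambda>x. x * ln x)"
proof -
  have "(\<lambda>x. (a + b * x + c * ln x)\<^sup>2) = (\<lambda>x. a\<^sup>2 + b\<^sup>2 * x\<^sup>2 + c\<^sup>2 * (ln x)\<^sup>2
      + 2 * a * b * x + 2 * a * c * ln x + 2 * b * c * (x * ln x))"
    by (simp add: fun_eq_iff power2_eq_square algebra_simps)
  then show ?thesis by (simp add: prob_space)
qed

lemma expectation_log_shift_square:
  "expectation (\<lambda>x. (ln x + c)\<^sup>2) = expectation (\<lambda>x. (ln x)\<^sup>2) + 2 * c * expectation ln + c\<^sup>2"
  using expectation_affine_square[of c 0 1] by (simp add: add.commute)

lemma expectation_log_plus_W_square_le: "expectation (\<lambda>x. (ln x + W)\<^sup>2) \<le> \<sigma>\<^sup>2"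
proof -
  let ?m = "exp (- W)"
  have "0 \<le> expectation (\<lambda>x. (ln x + W) * (x - ?m))"
    using AE_tilted_measure_pos
  proof (intro integral_nonneg_AE, eventually_elim)
    case (elim x)
    have "0 \<le> ln x + W \<longleftrightarrow> ?m \<le> x" using ln_ge_iff[of x "- W"] elim by linarith
    then show ?case by (auto simp: zero_le_mult_iff)
  qed
  also have "\<dots> = expectation (\<lambda>x. x * ln x) + W * expectation (\<lambda>x. x) - ?m * expectation ln - W * ?m"
    by (simp add: algebra_simps prob_space)
  finally have "0 \<le> W * (expectation (\<lambda>x. x * ln x) + W * expectation (\<lambda>x. x) - ?m * expectation ln - W * ?m)"
    using W_pos by simp
  also have "\<dots> = W * expectation (\<lambda>x. x * ln x) + W * (W * expectation (\<lambda>x. x))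
      - ?m * W * expectation ln - W * W * ?m"
    by (simp add: algebra_simps)
  also have "\<dots> = ?m * (\<sigma>\<^sup>2 - expectation (\<lambda>x. (ln x + W)\<^sup>2))"
    unfolding W_mult_x_log W_mult_mean expectation_log_shift_square by (simp add: power2_eq_square algebra_simps)
  finally show ?thesis by (simp add: zero_le_mult_iff)
qed

lemma mean_estimate: "\<bar>expectation (\<lambda>x. x) / exp (- W) - 1\<bar> \<le> (\<sigma>\<^sup>2 + 1) / (2 * W)"
proof -
  define d where "d = expectation ln + W"
  have "0 \<le> expectation (\<lambda>x. (ln x + (W + k))\<^sup>2)" for k
    by (simp add: integral_nonneg_AE)
  then have "0 \<le> expectation (\<lambda>x. (ln x + W)\<^sup>2) + 2 * k * d + k\<^sup>2" for k
    unfolding expectation_log_shift_square by (simp add: d_def power2_eq_square algebra_simps)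
  from this[of 1] this[of "-1"] expectation_log_plus_W_square_le have bound: "\<bar>d\<bar> \<le> (\<sigma>\<^sup>2 + 1) / 2"
    by (simp add: abs_le_iff)
  have "expectation (\<lambda>x. x) / exp (- W) - 1 = - d / W"
    using W_mult_mean W_pos by (simp add: d_def field_simps)
  then have "\<bar>expectation (\<lambda>x. x) / exp (- W) - 1\<bar> = \<bar>d\<bar> / W"
    using W_pos by simp
  also have "\<dots> \<le> (\<sigma>\<^sup>2 + 1) / 2 / W"
    using bound by (rule divide_right_mono) (use W_pos in simp)
  finally show ?thesis by simp
qed

lemma tilted_var_eq: "tilted_var \<sigma> \<theta> = expectation (\<lambda>x. x\<^sup>2) - (expectation (\<lambda>x. x))\<^sup>2"
  using variance_eq[of "\<lambda>x. x"] by (simp add: tilted_var_def tilted_mean_def)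

lemma W_mult_tilted_var:
  "W * tilted_var \<sigma> \<theta> = exp (- W) * (\<sigma>\<^sup>2 * expectation (\<lambda>x. x)
     - (expectation (\<lambda>x. x * ln x) - expectation (\<lambda>x. x) * expectation ln))"
proof -
  have "W * tilted_var \<sigma> \<theta> = W * expectation (\<lambda>x. x\<^sup>2) - expectation (\<lambda>x. x) * (W * expectation (\<lambda>x. x))"
    by (simp add: tilted_var_eq power2_eq_square algebra_simps)
  also have "\<dots> = exp (- W) * (\<sigma>\<^sup>2 * expectation (\<lambda>x. x)
     - (expectation (\<lambda>x. x * ln x) - expectation (\<lambda>x. x) * expectation ln))"
    unfolding W_mult_second_moment W_mult_mean by (simp add: algebra_simps)
  finally show ?thesis .
qed

lemma covariance_estimate:
  assumes "W \<ge> 1"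
  shows "\<bar>expectation (\<lambda>x. x * ln x) - expectation (\<lambda>x. x) * expectation ln\<bar> / (\<sigma>\<^sup>2 * exp (- W))
           \<le> (1 + expectation (\<lambda>x. x) / exp (- W)) / sqrt W"
proof -
  define m where "m = exp (- W)"
  define \<epsilon> where "\<epsilon> = 1 / sqrt W"
  define C where "C = expectation (\<lambda>x. x * ln x) - expectation (\<lambda>x. x) * expectation ln"
  define P where "P = expectation (\<lambda>x. (ln x + W)\<^sup>2)"
  define V where "V = tilted_var \<sigma> \<theta>"
  have "m > 0" "\<epsilon>\<^sup>2 * W = 1" "\<epsilon> * W = sqrt W"
    using W_pos by (auto simp: m_def \<epsilon>_def power2_eq_square field_simps real_sqrt_mult[symmetric])
  \<comment> \<open>Cauchy-Schwarz: \<open>E (\<epsilon> m (ln X + W) \<plusminus> (X - E X))\<^sup>2 \<ge> 0\<close>.\<close>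
  have "- (2 * k * \<epsilon> * m * C) \<le> (\<epsilon> * m)\<^sup>2 * P + V" if "k = 1 \<or> k = - 1" for k
  proof -
    have "0 \<le> expectation (\<lambda>x. (\<epsilon> * m * W - k * expectation (\<lambda>x. x) + k * x + \<epsilon> * m * ln x)\<^sup>2)"
      by (simp add: integral_nonneg_AE)
    also have "\<dots> = (\<epsilon> * m)\<^sup>2 * P + 2 * k * \<epsilon> * m * C + V"
      using that unfolding expectation_affine_square P_def expectation_log_shift_square V_def tilted_var_eq C_def
      by (elim disjE) (simp_all add: power2_eq_square algebra_simps)
    finally show ?thesis by simp
  qed
  from this[of 1] this[of "- 1"] have bound: "2 * \<epsilon> * m * \<bar>C\<bar> \<le> (\<epsilon> * m)\<^sup>2 * P + V"
    by (cases "C \<ge> 0") simp_all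
  have "m * (2 * sqrt W * \<bar>C\<bar>) = (2 * \<epsilon> * m * \<bar>C\<bar>) * W"
    unfolding \<open>\<epsilon> * W = sqrt W\<close>[symmetric] by (simp add: algebra_simps)
  also have "\<dots> \<le> ((\<epsilon> * m)\<^sup>2 * P + V) * W"
    using bound W_pos by (intro mult_right_mono) auto
  also have "\<dots> \<le> ((\<epsilon> * m)\<^sup>2 * \<sigma>\<^sup>2 + V) * W"
    using expectation_log_plus_W_square_le W_pos unfolding P_def by (intro mult_right_mono add_right_mono mult_left_mono) auto
  also have "\<dots> = (\<epsilon>\<^sup>2 * W) * m\<^sup>2 * \<sigma>\<^sup>2 + W * V"
    by (simp add: power2_eq_square algebra_simps)
  also have "\<dots> = m * (\<sigma>\<^sup>2 * (m + expectation (\<lambda>x. x)) - C)"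
    unfolding \<open>\<epsilon>\<^sup>2 * W = 1\<close> V_def W_mult_tilted_var C_def m_def by (simp add: power2_eq_square algebra_simps)
  finally have "2 * sqrt W * \<bar>C\<bar> \<le> \<sigma>\<^sup>2 * (m + expectation (\<lambda>x. x)) - C"
    using \<open>m > 0\<close> by simp
  moreover have "\<bar>C\<bar> \<le> sqrt W * \<bar>C\<bar>"
    using assms by (simp add: mult_le_cancel_right1)
  ultimately have "sqrt W * \<bar>C\<bar> \<le> \<sigma>\<^sup>2 * (m + expectation (\<lambda>x. x))"
    using abs_ge_minus_self[of C] by linarith
  then show ?thesis
    using W_pos sigma_pos \<open>m > 0\<close> by (simp add: C_def m_def field_simps)
qed

lemma variance_estimate:
  assumes "W \<ge> 1"
  shows "\<bar>W * tilted_var \<sigma> \<theta> / (\<sigma>\<^sup>2 * (exp (- W))\<^sup>2) - tilted_mean \<sigma> \<theta> / exp (- W)\<bar>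
           \<le> (1 + tilted_mean \<sigma> \<theta> / exp (- W)) / sqrt W"
proof -
  have "W * tilted_var \<sigma> \<theta> / (\<sigma>\<^sup>2 * (exp (- W))\<^sup>2) - tilted_mean \<sigma> \<theta> / exp (- W)
      = - (expectation (\<lambda>x. x * ln x) - expectation (\<lambda>x. x) * expectation ln) / (\<sigma>\<^sup>2 * exp (- W))"
    unfolding W_mult_tilted_var tilted_mean_def using sigma_pos by (simp add: power2_eq_square field_simps)
  then show ?thesis
    using covariance_estimate[OF assms] by (simp add: tilted_mean_def abs_minus_commute)
qed

end

lemma tilted_mean_asymptotics:
  fixes \<sigma> :: real
  assumes "\<sigma> > 0"
  shows "((\<lambda>\<theta>. tilted_mean \<sigma> \<theta> / exp (- lambertW (\<theta> * \<sigma>\<^sup>2))) \<longlongrightarrow> 1) at_top"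
proof -
  note W_lim = filterlim_lambertW_scaled_at_top[OF assms]
  have bound_lim: "((\<lambda>\<theta>. (\<sigma>\<^sup>2 + 1) / (2 * lambertW (\<theta> * \<sigma>\<^sup>2))) \<longlongrightarrow> 0) at_top"
    by (rule filterlim_compose[OF _ W_lim]) real_asymp
  have "eventually (\<lambda>\<theta>. norm (tilted_mean \<sigma> \<theta> / exp (- lambertW (\<theta> * \<sigma>\<^sup>2)) - 1)
                    \<le> (\<sigma>\<^sup>2 + 1) / (2 * lambertW (\<theta> * \<sigma>\<^sup>2))) at_top"
    using eventually_gt_at_top[of 0]
  proof eventually_elim
    case (elim \<theta>)
    interpret tilted_lognormal \<sigma> \<theta> using assms elim by unfold_locales
    show ?case using mean_estimate by (simp add: tilted_mean_def)
  qed
  from Lim_null_comparison[OF this bound_lim] show ?thesis by (rule LIM_zero_cancel)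
qed

lemma tilted_var_asymptotics:
  fixes \<sigma> :: real
  assumes "\<sigma> > 0"
  shows "((\<lambda>\<theta>. lambertW (\<theta> * \<sigma>\<^sup>2) * tilted_var \<sigma> \<theta> / (\<sigma>\<^sup>2 * (exp (- lambertW (\<theta> * \<sigma>\<^sup>2)))\<^sup>2))
           \<longlongrightarrow> 1) at_top"
proof -
  define W where "W \<theta> = lambertW (\<theta> * \<sigma>\<^sup>2)" for \<theta>
  define q where "q \<theta> = tilted_mean \<sigma> \<theta> / exp (- W \<theta>)" for \<theta>
  have W_lim: "filterlim W at_top at_top"
    unfolding W_def by (rule filterlim_lambertW_scaled_at_top[OF assms])
  have q_lim: "(q \<longlongrightarrow> 1) at_top"
    unfolding q_def W_def by (rule tilted_mean_asymptotics[OF assms])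
  have "((\<lambda>\<theta>. 1 / sqrt (W \<theta>)) \<longlongrightarrow> 0) at_top"
    by (rule filterlim_compose[OF _ W_lim]) real_asymp
  from tendsto_mult[OF tendsto_add[OF tendsto_const[of 1] q_lim] this]
  have bound_lim: "((\<lambda>\<theta>. (1 + q \<theta>) * (1 / sqrt (W \<theta>))) \<longlongrightarrow> 0) at_top"
    by simp
  have "eventually (\<lambda>\<theta>. norm (W \<theta> * tilted_var \<sigma> \<theta> / (\<sigma>\<^sup>2 * (exp (- W \<theta>))\<^sup>2) - q \<theta>)
                    \<le> (1 + q \<theta>) * (1 / sqrt (W \<theta>))) at_top"
    using eventually_gt_at_top[of 0] W_lim[unfolded filterlim_at_top, rule_format, of 1]
  proof eventually_elim
    case (elim \<theta>)
    interpret tilted_lognormal \<sigma> \<theta> using assms elim by unfold_locales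
    show ?case using variance_estimate elim by (simp add: q_def W_def)
  qed
  from tendsto_add[OF Lim_null_comparison[OF this bound_lim] q_lim] show ?thesis
    by (simp add: W_def)
qed

lemma exp_half_sigma2_theta_tendsto:
  fixes \<sigma> :: real
  assumes "\<sigma> > 0"
  shows "((\<lambda>\<theta>. exp (sigma2_theta \<sigma> \<theta> / 2)) \<longlongrightarrow> 1) at_top"
  unfolding sigma2_theta_def
  by (rule filterlim_compose[OF _ filterlim_lambertW_scaled_at_top[OF assms]]) real_asymp

lemma sigma2_theta_variance_factor_tendsto:
  fixes \<sigma> :: real
  assumes "\<sigma> > 0"
  shows "((\<lambda>\<theta>. \<sigma>\<^sup>2 / (lambertW (\<theta> * \<sigma>\<^sup>2) * exp (sigma2_theta \<sigma> \<theta>) * (exp (sigma2_theta \<sigma> \<theta>) - 1)))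
           \<longlongrightarrow> 1) at_top"
proof -
  have "((\<lambda>w. \<sigma>\<^sup>2 / (w * exp (\<sigma>\<^sup>2 / (1 + w)) * (exp (\<sigma>\<^sup>2 / (1 + w)) - 1))) \<longlongrightarrow> 1) at_top"
    using assms by real_asymp
  from filterlim_compose[OF this filterlim_lambertW_scaled_at_top[OF assms]] show ?thesis
    by (simp add: sigma2_theta_def)
qed

lemma tilted_mean_normalisation_eq:
  "tilted_mean \<sigma> \<theta> / exp (mu_theta \<sigma> \<theta> + sigma2_theta \<sigma> \<theta> / 2)
     = tilted_mean \<sigma> \<theta> / exp (- lambertW (\<theta> * \<sigma>\<^sup>2)) / exp (sigma2_theta \<sigma> \<theta> / 2)"
  by (simp only: mu_theta_def exp_add divide_divide_eq_left)

lemma tilted_var_normalisation_eq: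
  fixes \<sigma> \<theta> :: real
  assumes "\<sigma> > 0" "\<theta> > 0"
  shows "tilted_var \<sigma> \<theta> / (exp (2 * mu_theta \<sigma> \<theta> + sigma2_theta \<sigma> \<theta>) * (exp (sigma2_theta \<sigma> \<theta>) - 1))
     = lambertW (\<theta> * \<sigma>\<^sup>2) * tilted_var \<sigma> \<theta> / (\<sigma>\<^sup>2 * (exp (- lambertW (\<theta> * \<sigma>\<^sup>2)))\<^sup>2)
       * (\<sigma>\<^sup>2 / (lambertW (\<theta> * \<sigma>\<^sup>2) * exp (sigma2_theta \<sigma> \<theta>) * (exp (sigma2_theta \<sigma> \<theta>) - 1)))"
proof -
  have "lambertW (\<theta> * \<sigma>\<^sup>2) > 0" using assms by (simp add: lambertW_pos)
  then have "exp (sigma2_theta \<sigma> \<theta>) > 1" using assms by (simp add: sigma2_theta_def)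
  moreover have "exp (2 * mu_theta \<sigma> \<theta> + sigma2_theta \<sigma> \<theta>)
                   = (exp (- lambertW (\<theta> * \<sigma>\<^sup>2)))\<^sup>2 * exp (sigma2_theta \<sigma> \<theta>)"
    unfolding mu_theta_def by (simp add: power2_eq_square flip: exp_add)
  ultimately show ?thesis
    using assms \<open>lambertW (\<theta> * \<sigma>\<^sup>2) > 0\<close> by (simp add: field_simps)
qed

theorem corollary2p2:
  fixes \<sigma> :: real
  assumes "\<sigma> > 0"
  shows "((\<lambda>\<theta>. tilted_mean \<sigma> \<theta> / exp (mu_theta \<sigma> \<theta> + sigma2_theta \<sigma> \<theta> / 2))
            \<longlongrightarrow> 1) at_top \<and>
         ((\<lambda>\<theta>. tilted_var \<sigma> \<theta> /
             (exp (2 * mu_theta \<sigma> \<theta> + sigma2_theta \<sigma> \<theta>) * (exp (sigma2_theta \<sigma> \<theta>) - 1)))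
            \<longlongrightarrow> 1) at_top"
proof
  show "((\<lambda>\<theta>. tilted_mean \<sigma> \<theta> / exp (mu_theta \<sigma> \<theta> + sigma2_theta \<sigma> \<theta> / 2)) \<longlongrightarrow> 1) at_top"
    unfolding tilted_mean_normalisation_eq
    using tendsto_divide[OF tilted_mean_asymptotics[OF assms] exp_half_sigma2_theta_tendsto[OF assms]]
    by (simp only: div_by_1)
next
  have "eventually (\<lambda>\<theta>. lambertW (\<theta> * \<sigma>\<^sup>2) * tilted_var \<sigma> \<theta> / (\<sigma>\<^sup>2 * (exp (- lambertW (\<theta> * \<sigma>\<^sup>2)))\<^sup>2)
        * (\<sigma>\<^sup>2 / (lambertW (\<theta> * \<sigma>\<^sup>2) * exp (sigma2_theta \<sigma> \<theta>) * (exp (sigma2_theta \<sigma> \<theta>) - 1)))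
      = tilted_var \<sigma> \<theta> / (exp (2 * mu_theta \<sigma> \<theta> + sigma2_theta \<sigma> \<theta>) * (exp (sigma2_theta \<sigma> \<theta>) - 1)))
      at_top"
    using eventually_gt_at_top[of 0]
    by (rule eventually_mono) (simp add: tilted_var_normalisation_eq[OF assms])
  with tendsto_mult[OF tilted_var_asymptotics[OF assms] sigma2_theta_variance_factor_tendsto[OF assms]]
  show "((\<lambda>\<theta>. tilted_var \<sigma> \<theta> /
          (exp (2 * mu_theta \<sigma> \<theta> + sigma2_theta \<sigma> \<theta>) * (exp (sigma2_theta \<sigma> \<theta>) - 1))) \<longlongrightarrow> 1) at_top"
    unfolding mult_1 by (rule Lim_transform_eventually)
qed

end
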